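(* Suppose $F$ is a $\mu$-PL function for some $\mu>0$. Let $b\le n$ and $\eta=\rho/L$ where $0<\rho\le 1/5$ satisfies $$\frac{16n^2\rho^2}{b^3}+\rho\le 1,$$ and let $T=\lceil 6L/(\mu\rho)\rceil$. Then for every integer $K\ge1$, the output $x^K$ of PL-SAGA$(x^0,K,T,b,\eta)$ satisfies $$\mathbb E\big[F(x^K)-F(x^* )\big]\le \frac{F(x^0)-F(x^* )}{2^K},$$ where $x^*$ is an optimal solution of $\min_x F(x)$.
   Context: Setting: Let $n,d\ge 1$ be integers and $[n]=\{1,\dots,n\}$. Let $f_1,\dots,f_n:\mathbb R^d\to\mathbb R$ be differentiable (possibly nonconvex) functions, each $L$-smooth for some $L>0$, i.e. $\|\nabla f_i(x)-\nabla f_i(y)\|\le L\|x-y\|$ for all $x,y\in\mathbb R^d$ and $i\in[n]$. Let $f=\frac1n\sum_{i=1}^n f_i$. Let $h:\mathbb R^d\to\mathbb R\cup\{+\infty\}$ be proper, lower semicontinuous and convex, with closed domain. Let $F=f+h$, and let $x^*$ be a global minimizer of $F$ on $\mathbb R^d$ (assumed to exist). For $\eta>0$, $\mathrm{prox}_{\eta h}(x):=\arg\min_{y\in\mathbb R^d}\big(h(y)+\frac1{2\eta}\|y-x\|^2\big)$. $\mu$-PL functions: for $x\in\mathbb R^d$ and $\alpha>0$ define $D_h(x,\alpha):=-2\alpha\min_{y\in\mathbb R^d}\big[\langle\nabla f(x),y-x\rangle+\frac{\alpha}{2}\|y-x\|^2+h(y)-h(x)\big]$. $F$ is called $\mu$-PL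 ($\mu>0$) if $\mu\,(F(x)-F(x^* ))\le \frac12 D_h(x,\mu)$ for all $x\in\mathrm{dom}(h)$. Algorithm ProxSAGA$(x^0,T,b,\eta)$: Given $x^0\in\mathbb R^d$, positive integers $T,b$ and $\eta>0$, set $\alpha^0_i=x^0$ for all $i\in[n]$. For $t=0,1,\dots$ let $g^t=\frac1n\sum_{i=1}^n\nabla f_i(\alpha^t_i)$. For $t=0,\dots,T-1$: draw two multisets $I_t,J_t$, each consisting of $b$ indices drawn independently and uniformly at random from $[n]$ (with replacement; $I_t$, $J_t$ independent of each other and of all previous draws); set $v^t=\frac1b\sum_{i\in I_t}\big(\nabla f_i(x^t)-\nabla f_i(\alpha^t_i)\big)+g^t$ and $x^{t+1}=\mathrm{prox}_{\eta h}(x^t-\eta v^t)$; set $\alpha^{t+1}_j=x^t$ for $j\in J_t$ and $\alpha^{t+1}_j=\alpha^t_j$ for $j\notin J_t$. The output $x_a$ is chosen uniformly at random from $\{x^0,\dots,x^{T-1}\}$. Algorithm PL-SAGA$(x^0,K,T,b,\eta)$: for $k=1,\dots,K$, let $x^k$ be the output $x_a$ of ProxSAGA$(x^{k-1},T,b,\eta)$ (run with fresh independent randomness); output $x^K$. Expectations are over all randomness. *)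

theory Defs
  imports "HOL-Probability.Probability"
begin

(* Extended-valued h : R^d -> R \<union> {+\<infinity>} is modelled as h :: real^'d \<Rightarrow> ereal. *)

definition proper_fun :: "('a \<Rightarrow> ereal) \<Rightarrow> bool" where
  "proper_fun h \<longleftrightarrow> (\<exists>x. h x < \<infinity>) \<and> (\<forall>x. h x > -\<infinity>)"

definition epigraph :: "('a \<Rightarrow> ereal) \<Rightarrow> ('a \<times> real) set" where
  "epigraph h = {(x, t). h x \<le> ereal t}"

definition convex_efun :: "('a::real_vector \<Rightarrow> ereal) \<Rightarrow> bool" where
  "convex_efun h \<longleftrightarrow> convex (epigraph h)"

definition lsc_efun :: "('a::topological_space \<Rightarrow> ereal) \<Rightarrow> bool" where
  "lsc_efun h \<longleftrightarrow> closed (epigraph h)"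

definition edom :: "('a \<Rightarrow> ereal) \<Rightarrow> 'a set" where
  "edom h = {x. h x < \<infinity>}"

definition prox :: "real \<Rightarrow> ('a::real_normed_vector \<Rightarrow> ereal) \<Rightarrow> 'a \<Rightarrow> 'a" where
  "prox \<eta> h x = (SOME y. \<forall>z. h y + ereal ((norm (y - x))\<^sup>2 / (2 * \<eta>))
                               \<le> h z + ereal ((norm (z - x))\<^sup>2 / (2 * \<eta>)))"

definition Dh :: "('a::real_inner \<Rightarrow> 'a) \<Rightarrow> ('a \<Rightarrow> ereal) \<Rightarrow> 'a \<Rightarrow> real \<Rightarrow> ereal" where
  "Dh gradf h x \<alpha> = ereal (-2 * \<alpha>) *
     (INF y. ereal (inner (gradf x) (y - x) + \<alpha> / 2 * (norm (y - x))\<^sup>2) + h y - h x)"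

(* F = f + h is \<mu>-PL, with f given by value f and gradient gradf, xs a global minimizer *)
definition is_PL :: "real \<Rightarrow> ('a::real_inner \<Rightarrow> real) \<Rightarrow> ('a \<Rightarrow> 'a) \<Rightarrow> ('a \<Rightarrow> ereal) \<Rightarrow> 'a \<Rightarrow> bool" where
  "is_PL \<mu> f gradf h xs \<longleftrightarrow>
     (\<forall>x\<in>edom h. ereal \<mu> * ((ereal (f x) + h x) - (ereal (f xs) + h xs)) \<le> ereal (1/2) * Dh gradf h x \<mu>)"

fun draw_indices :: "nat \<Rightarrow> nat \<Rightarrow> nat list pmf" where
  "draw_indices n 0 = return_pmf []"
| "draw_indices n (Suc k) =
     bind_pmf (pmf_of_set {1..n}) (\<lambda>i. bind_pmf (draw_indices n k) (\<lambda>is. return_pmf (i # is)))"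

(* one iteration of ProxSAGA on state (x^t, \<alpha>^t); gf i = \<nabla> f_i *)
definition saga_step ::
  "nat \<Rightarrow> nat \<Rightarrow> real \<Rightarrow> (nat \<Rightarrow> 'a::real_normed_vector \<Rightarrow> 'a) \<Rightarrow> ('a \<Rightarrow> ereal)
   \<Rightarrow> 'a \<times> (nat \<Rightarrow> 'a) \<Rightarrow> ('a \<times> (nat \<Rightarrow> 'a)) pmf" where
  "saga_step n b \<eta> gf h s =
     (case s of (x, \<alpha>) \<Rightarrow>
       bind_pmf (draw_indices n b) (\<lambda>I. bind_pmf (draw_indices n b) (\<lambda>J.
         let g = (1 / real n) *\<^sub>R (\<Sum>i=1..n. gf i (\<alpha> i));
             v = (1 / real b) *\<^sub>R sum_list (map (\<lambda>i. gf i x - gf i (\<alpha> i)) I) + g;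
             x' = prox \<eta> h (x - \<eta> *\<^sub>R v);
             \<alpha>' = (\<lambda>j. if j \<in> set J then x else \<alpha> j)
         in return_pmf (x', \<alpha>'))))"

fun saga_iter ::
  "nat \<Rightarrow> nat \<Rightarrow> real \<Rightarrow> (nat \<Rightarrow> 'a::real_normed_vector \<Rightarrow> 'a) \<Rightarrow> ('a \<Rightarrow> ereal)
   \<Rightarrow> 'a \<Rightarrow> nat \<Rightarrow> ('a \<times> (nat \<Rightarrow> 'a)) pmf" where
  "saga_iter n b \<eta> gf h x0 0 = return_pmf (x0, \<lambda>_. x0)"
| "saga_iter n b \<eta> gf h x0 (Suc t) = bind_pmf (saga_iter n b \<eta> gf h x0 t) (saga_step n b \<eta> gf h)"

definition prox_saga ::
  "nat \<Rightarrow> (nat \<Rightarrow> 'a::real_normed_vector \<Rightarrow> 'a) \<Rightarrow> ('a \<Rightarrow> ereal)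
   \<Rightarrow> 'a \<Rightarrow> nat \<Rightarrow> nat \<Rightarrow> real \<Rightarrow> 'a pmf" where
  "prox_saga n gf h x0 T b \<eta> =
     bind_pmf (pmf_of_set {0..<T}) (\<lambda>a. map_pmf fst (saga_iter n b \<eta> gf h x0 a))"

fun pl_saga ::
  "nat \<Rightarrow> (nat \<Rightarrow> 'a::real_normed_vector \<Rightarrow> 'a) \<Rightarrow> ('a \<Rightarrow> ereal)
   \<Rightarrow> 'a \<Rightarrow> nat \<Rightarrow> nat \<Rightarrow> nat \<Rightarrow> real \<Rightarrow> 'a pmf" where
  "pl_saga n gf h x0 0 T b \<eta> = return_pmf x0"
| "pl_saga n gf h x0 (Suc k) T b \<eta> =
     bind_pmf (pl_saga n gf h x0 k T b \<eta>) (\<lambda>x. prox_saga n gf h x T b \<eta>)"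

end

theory Submission
  imports Defs
begin

text \<open>Each epoch of ProxSAGA is analysed with the Lyapunov function
  R(x, \<alpha>) = F x + c * (1/n) * (\<Sum>i. norm (x - \<alpha> i)^2).
  A proximal gradient step with estimator v decreases F by \<eta> \<mu> (F x - F xs), thanks to the
  proximal PL inequality, up to two error terms: the variance of v, at most (L^2/b) times the
  dispersion of the memory, and the growth of the dispersion when b memory slots are refreshed.
  The condition on \<rho> makes both fit into the weight c and the curvature 1/(2\<eta>) - L/2 of the
  step, so E R(x^(t+1)) \<le> E R(x^t) - \<eta> \<mu> E (F x^t - F xs). Telescoping over
  T \<ge> 6/(\<eta> \<mu>) steps bounds the expected gap of the uniformly chosen output by a sixth, in
  particular a half, of the initial gap, and K epochs give the factor 2^-K.\<close>

section \<open>Proximal operators of proper lsc convex functions\<close>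

lemma proper_fun_ereal:
  assumes "proper_fun h" and "h x < \<infinity>"
  shows "h x = ereal (real_of_ereal (h x))"
  using assms unfolding proper_fun_def by (cases "h x") auto

lemma convex_efun_le:
  fixes h :: "'a::real_vector \<Rightarrow> ereal"
  assumes "convex_efun h" and "h x = ereal r" and "h y = ereal s" and "0 \<le> t" "t \<le> 1"
  shows "h ((1 - t) *\<^sub>R x + t *\<^sub>R y) \<le> ereal ((1 - t) * r + t * s)"
proof -
  have "(x, r) \<in> epigraph h" "(y, s) \<in> epigraph h"
    using assms(2,3) by (auto simp: epigraph_def)
  then have "(1 - t) *\<^sub>R (x, r) + t *\<^sub>R (y, s) \<in> epigraph h"
    using assms(1,4,5) unfolding convex_efun_def convex_def by (metis diff_add_cancel diff_ge_0_iff_ge)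
  then show ?thesis by (simp add: epigraph_def)
qed

lemma proper_lsc_convex_affine_minorant:
  fixes h :: "'a::euclidean_space \<Rightarrow> ereal"
  assumes "proper_fun h" and "lsc_efun h" and "convex_efun h"
  obtains a c where "\<And>y. ereal (c + inner a y) \<le> h y"
proof -
  obtain x1 where "h x1 < \<infinity>" using assms(1) unfolding proper_fun_def by auto
  then obtain r where r: "h x1 = ereal r" using proper_fun_ereal[OF assms(1)] by blast
  have "(x1, r - 1) \<notin> epigraph h" using r by (simp add: epigraph_def)
  then obtain p d where pd: "inner p (x1, r - 1) < d" "\<forall>q\<in>epigraph h. inner p q > d"
    using separating_hyperplane_closed_point assms(2,3)
    unfolding lsc_efun_def convex_efun_def by blast
  obtain a s where p: "p = (a, s)" by (cases p)
  have "(x1, r) \<in> epigraph h" using r by (simp add: epigraph_def)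
  then have "inner a x1 + s * r > d" using pd(2) p by (auto simp: inner_Pair)
  moreover have "inner a x1 + s * (r - 1) < d" using pd(1) p by (simp add: inner_Pair)
  ultimately have s: "s > 0" by (simp add: algebra_simps)
  \<comment> \<open>the separating hyperplane is not vertical, so it is the graph of an affine minorant\<close>
  have "ereal (d / s + inner (- (1 / s) *\<^sub>R a) y) \<le> h y" for y
  proof (cases "h y")
    case (real t)
    then have "(y, t) \<in> epigraph h" by (simp add: epigraph_def)
    then have "inner a y + s * t > d" using pd(2) p by (auto simp: inner_Pair)
    then have "d / s - inner a y / s < t" using s by (simp add: field_simps)
    then show ?thesis using real by (simp add: inner_minus_left)
  next
    case MInf
    then show ?thesis using assms(1) unfolding proper_fun_def by simp
  qed simp
  then show thesis by (rule that)
qed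

lemma quadratic_minus_linear_le_imp_le:
  fixes r A D e :: real
  assumes "e > 0" and "r \<ge> 0" and "A \<ge> 0" and "r\<^sup>2 / (2 * e) - A * r \<le> D"
  shows "r \<le> 2 * e * (A + \<bar>D\<bar>) + 1"
proof (rule ccontr)
  assume "\<not> ?thesis"
  then have r: "r > 2 * e * (A + \<bar>D\<bar>) + 1" by simp
  have "2 * e * (A + \<bar>D\<bar>) \<ge> 0" using assms(1,3) by simp
  then have r1: "r > 1" using r by linarith
  define X where "X = r / (2 * e) - A"
  have X: "X > \<bar>D\<bar>" using r assms(1) by (simp add: X_def field_simps)
  have "r * X > 1 * X" using r1 X by (intro mult_strict_right_mono) auto
  moreover have "r * X = r\<^sup>2 / (2 * e) - A * r"
    using assms(1) by (simp add: X_def field_simps power2_eq_square)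
  ultimately show False using assms(4) X by linarith
qed

lemma compact_epigraph_sublevel:
  fixes h :: "'a::euclidean_space \<Rightarrow> ereal"
  assumes hp: "proper_fun h" and hl: "lsc_efun h" and hc: "convex_efun h" and e: "e > 0"
  shows "compact (epigraph h \<inter> {(y, t). t + (norm (y - z))\<^sup>2 / (2 * e) \<le> C})"
    (is "compact ?S")
proof -
  obtain a c where minorant: "\<And>y. ereal (c + inner a y) \<le> h y"
    using proper_lsc_convex_affine_minorant[OF hp hl hc] by blast
  have "closed ?S"
    using hl e unfolding lsc_efun_def case_prod_unfold
    by (intro closed_Int closed_Collect_le continuous_intros) auto
  define D where "D = C - c + norm a * norm z"
  define R where "R = 2 * e * (norm a + \<bar>D\<bar>) + 1"
  have "?S \<subseteq> cball z R \<times> {c - norm a * (R + norm z) .. C}"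
  proof
    fix p assume "p \<in> ?S"
    obtain y t where p: "p = (y, t)" by (cases p)
    have hy: "h y \<le> ereal t" and upper: "t + (norm (y - z))\<^sup>2 / (2 * e) \<le> C"
      using \<open>p \<in> ?S\<close> p by (simp_all add: epigraph_def)
    have lower: "c + inner a y \<le> t" using minorant[of y] hy by (metis ereal_less_eq(3) order_trans)
    have "norm y \<le> norm (y - z) + norm z" by (metis norm_triangle_sub add.commute)
    then have ay: "inner a y \<ge> - (norm a * (norm (y - z) + norm z))"
      using Cauchy_Schwarz_ineq2[of a y] by (smt (verit) mult_left_mono norm_ge_zero)
    then have "(norm (y - z))\<^sup>2 / (2 * e) - norm a * norm (y - z) \<le> D"
      using upper lower by (simp add: D_def algebra_simps)
    then have r: "norm (y - z) \<le> R"
      unfolding R_def by (intro quadratic_minus_linear_le_imp_le) (use e in auto)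
    have "(norm (y - z))\<^sup>2 / (2 * e) \<ge> 0" using e by simp
    moreover have "norm a * (norm (y - z) + norm z) \<le> norm a * (R + norm z)"
      using r by (simp add: mult_left_mono)
    ultimately show "p \<in> cball z R \<times> {c - norm a * (R + norm z) .. C}"
      using p r upper lower ay by (simp add: dist_norm norm_minus_commute)
  qed
  then show ?thesis
    using \<open>closed ?S\<close> bounded_subset bounded_Times bounded_cball bounded_closed_interval
    by (metis compact_eq_bounded_closed)
qed

lemma prox_objective_attains_min:
  fixes h :: "'a::euclidean_space \<Rightarrow> ereal"
  assumes hp: "proper_fun h" and hl: "lsc_efun h" and hc: "convex_efun h" and e: "e > 0"
  shows "\<exists>y. \<forall>w. h y + ereal ((norm (y - z))\<^sup>2 / (2 * e)) \<le> h w + ereal ((norm (w - z))\<^sup>2 / (2 * e))"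
proof -
  obtain x1 where "h x1 < \<infinity>" using hp unfolding proper_fun_def by auto
  then obtain r1 where r1: "h x1 = ereal r1" using proper_fun_ereal[OF hp] by blast
  define q where "q y = (norm (y - z))\<^sup>2 / (2 * e)" for y
  define g where "g p = snd p + q (fst p)" for p :: "'a \<times> real"
  \<comment> \<open>minimise the continuous function g over a compact sublevel set of the epigraph\<close>
  define S where "S = epigraph h \<inter> {(y, t). t + q y \<le> r1 + q x1}"
  have "compact S"
    unfolding S_def q_def by (rule compact_epigraph_sublevel[OF hp hl hc e])
  have x1S: "(x1, r1) \<in> S" using r1 by (simp add: S_def epigraph_def)
  have "continuous_on S g" unfolding g_def q_def using e by (intro continuous_intros) auto
  then obtain p where pS: "p \<in> S" and pmin: "\<And>p'. p' \<in> S \<Longrightarrow> g p \<le> g p'"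
    using continuous_attains_inf[OF \<open>compact S\<close>] x1S by blast
  obtain y t where p: "p = (y, t)" by (cases p)
  have hy: "h y \<le> ereal t" using pS p by (simp add: S_def epigraph_def)
  have "h y + ereal (q y) \<le> h w + ereal (q w)" for w
  proof (cases "h w")
    case (real tw)
    have "t + q y \<le> tw + q w"
    proof (cases "tw + q w \<le> r1 + q x1")
      case True
      then have "(w, tw) \<in> S" using real by (simp add: S_def epigraph_def)
      then show ?thesis using pmin[of "(w, tw)"] p by (simp add: g_def)
    next
      case False
      then show ?thesis using pmin[OF x1S] p by (simp add: g_def)
    qed
    then show ?thesis using hy real
      by (metis add_right_mono ereal_less_eq(3) order_trans plus_ereal.simps(1))
  next
    case MInf
    then show ?thesis using hp unfolding proper_fun_def by simp
  qed simp
  then show ?thesis unfolding q_def by blast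
qed

lemma prox_minimal:
  fixes h :: "'a::euclidean_space \<Rightarrow> ereal"
  assumes "proper_fun h" and "lsc_efun h" and "convex_efun h" and "e > 0"
  shows "h (prox e h z) + ereal ((norm (prox e h z - z))\<^sup>2 / (2 * e))
         \<le> h w + ereal ((norm (w - z))\<^sup>2 / (2 * e))"
  using someI_ex[OF prox_objective_attains_min[OF assms]] unfolding prox_def by blast

lemma prox_in_edom:
  fixes h :: "'a::euclidean_space \<Rightarrow> ereal"
  assumes "proper_fun h" and "lsc_efun h" and "convex_efun h" and "e > 0"
  shows "h (prox e h z) < \<infinity>"
proof -
  obtain w where "h w < \<infinity>" using assms(1) unfolding proper_fun_def by auto
  then show ?thesis using prox_minimal[OF assms, of z w] by auto
qed

lemma le_of_forall_le_add_mult: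
  fixes A B C :: real
  assumes "\<And>t. 0 < t \<Longrightarrow> t \<le> 1 \<Longrightarrow> A \<le> B + t * C" and "C \<ge> 0"
  shows "A \<le> B"
proof (rule ccontr)
  assume "\<not> A \<le> B"
  define t where "t = min 1 ((A - B) / (2 * C + 1))"
  have t0: "t > 0" using \<open>\<not> A \<le> B\<close> assms(2) by (simp add: t_def)
  have "t * C \<le> (A - B) / (2 * C + 1) * C"
    using assms(2) by (intro mult_right_mono) (auto simp: t_def)
  also have "\<dots> = (A - B) * (C / (2 * C + 1))" by simp
  also have "\<dots> < A - B"
    using \<open>\<not> A \<le> B\<close> assms(2) mult_strict_left_mono[of "C / (2 * C + 1)" 1 "A - B"] by simp
  finally show False using assms(1)[OF t0] by (simp add: t_def)
qed

lemma norm_add_square: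
  fixes a b :: "'a::real_inner"
  shows "(norm (a + b))\<^sup>2 = (norm a)\<^sup>2 + 2 * inner a b + (norm b)\<^sup>2"
  by (simp add: power2_norm_eq_inner inner_add_left inner_add_right inner_commute)

lemma norm_diff_square:
  fixes a b :: "'a::real_inner"
  shows "(norm (a - b))\<^sup>2 = (norm a)\<^sup>2 - 2 * inner a b + (norm b)\<^sup>2"
  by (simp add: power2_norm_eq_inner inner_diff_left inner_diff_right inner_commute)

lemma prox_three_point:
  fixes h :: "'a::euclidean_space \<Rightarrow> ereal" and z :: 'a
  assumes hp: "proper_fun h" and hl: "lsc_efun h" and hc: "convex_efun h" and e: "e > 0"
    and hw: "h w = ereal tw"
  defines "y \<equiv> prox e h z"
  shows "real_of_ereal (h y) + (norm (y - z))\<^sup>2 / (2 * e) + (norm (w - y))\<^sup>2 / (2 * e)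
         \<le> tw + (norm (w - z))\<^sup>2 / (2 * e)"
proof -
  obtain hy where hy: "h y = ereal hy"
    using proper_fun_ereal[OF hp prox_in_edom[OF hp hl hc e]] unfolding y_def by blast
  define q where "q u = (norm (u - z))\<^sup>2 / (2 * e)" for u
  \<comment> \<open>compare y with the points of the segment from y to w\<close>
  have segment: "hy - tw \<le> (2 * inner (y - z) (w - y) + t * (norm (w - y))\<^sup>2) / (2 * e)"
    if t: "0 < t" "t \<le> 1" for t
  proof -
    define yt where "yt = (1 - t) *\<^sub>R y + t *\<^sub>R w"
    have "ereal (hy + q y) \<le> h yt + ereal (q yt)"
      using prox_minimal[OF hp hl hc e, of z yt] hy unfolding y_def q_def by simp
    also have "\<dots> \<le> ereal ((1 - t) * hy + t * tw) + ereal (q yt)"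
      unfolding yt_def by (intro add_right_mono convex_efun_le[OF hc hy hw]) (use t in auto)
    finally have "hy + q y \<le> (1 - t) * hy + t * tw + q yt" by simp
    moreover have "yt - z = (y - z) + t *\<^sub>R (w - y)" by (simp add: yt_def algebra_simps)
    then have "(norm (yt - z))\<^sup>2
               = (norm (y - z))\<^sup>2 + 2 * t * inner (y - z) (w - y) + t\<^sup>2 * (norm (w - y))\<^sup>2"
      by (simp only: norm_add_square) (simp add: power_mult_distrib)
    then have "q yt - q y = t * ((2 * inner (y - z) (w - y) + t * (norm (w - y))\<^sup>2) / (2 * e))"
      unfolding q_def using e by (simp add: field_simps power2_eq_square)
    ultimately have "t * (hy - tw) \<le> t * ((2 * inner (y - z) (w - y) + t * (norm (w - y))\<^sup>2) / (2 * e))"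
      by (simp add: algebra_simps)
    then show ?thesis by (simp only: mult_le_cancel_left_pos[OF t(1)])
  qed
  have "hy - tw \<le> (2 * inner (y - z) (w - y)) / (2 * e)"
    by (rule le_of_forall_le_add_mult[where C = "(norm (w - y))\<^sup>2 / (2 * e)"])
       (use segment e in \<open>auto simp: add_divide_distrib\<close>)
  moreover have "(norm (w - z))\<^sup>2 = (norm (w - y))\<^sup>2 + 2 * inner (y - z) (w - y) + (norm (y - z))\<^sup>2"
    using norm_add_square[of "w - y" "y - z"] by (simp add: inner_commute)
  ultimately show ?thesis using hy by (simp add: add_divide_distrib)
qed

section \<open>Composite objectives satisfying the proximal PL inequality\<close>

lemma descent_lemma:
  fixes f :: "'a::real_inner \<Rightarrow> real"
  assumes deriv: "\<And>x. (f has_derivative (\<lambda>v. inner (g x) v)) (at x)"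
    and lipschitz: "\<And>x y. norm (g x - g y) \<le> L * norm (x - y)"
  shows "f y \<le> f x + inner (g x) (y - x) + L / 2 * (norm (y - x))\<^sup>2"
proof -
  define d where "d = y - x"
  define \<phi> where "\<phi> t = f (x + t *\<^sub>R d) - t * inner (g x) d - L / 2 * t\<^sup>2 * (norm d)\<^sup>2" for t
  have phi_deriv:
    "(\<phi> has_real_derivative (inner (g (x + t *\<^sub>R d)) d - inner (g x) d - L * t * (norm d)\<^sup>2)) (at t)"
    for t
  proof -
    have "((\<lambda>t. x + t *\<^sub>R d) has_derivative (\<lambda>s. s *\<^sub>R d)) (at t)"
      by (auto intro!: derivative_eq_intros)
    from has_derivative_compose[OF this deriv]
    have "((\<lambda>t. f (x + t *\<^sub>R d)) has_derivative (\<lambda>s. inner (g (x + t *\<^sub>R d)) (s *\<^sub>R d))) (at t)" .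
    moreover have "(\<lambda>s. inner (g (x + t *\<^sub>R d)) (s *\<^sub>R d)) = (*) (inner (g (x + t *\<^sub>R d)) d)"
      by (auto simp: mult.commute)
    ultimately have "((\<lambda>t. f (x + t *\<^sub>R d)) has_real_derivative inner (g (x + t *\<^sub>R d)) d) (at t)"
      unfolding has_field_derivative_def by simp
    then show ?thesis unfolding \<phi>_def[abs_def]
      by (auto intro!: derivative_eq_intros simp: power2_eq_square)
  qed
  have slope_nonpos: "inner (g (x + t *\<^sub>R d)) d - inner (g x) d - L * t * (norm d)\<^sup>2 \<le> 0"
    if "0 \<le> t" for t
  proof -
    have "inner (g (x + t *\<^sub>R d)) d - inner (g x) d \<le> norm (g (x + t *\<^sub>R d) - g x) * norm d"
      by (metis inner_diff_left norm_cauchy_schwarz)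
    also have "\<dots> \<le> L * norm (t *\<^sub>R d) * norm d"
      using lipschitz[of "x + t *\<^sub>R d" x] by (intro mult_right_mono) auto
    also have "\<dots> = L * t * (norm d)\<^sup>2" using that by (simp add: power2_eq_square)
    finally show ?thesis by simp
  qed
  have "\<phi> 1 \<le> \<phi> 0"
    by (rule DERIV_nonpos_imp_nonincreasing[of 0 1]) (use phi_deriv slope_nonpos in force)+
  then show ?thesis unfolding \<phi>_def d_def by simp
qed

locale composite_PL =
  fixes f :: "'a::euclidean_space \<Rightarrow> real" and g :: "'a \<Rightarrow> 'a" and L :: real
    and h :: "'a \<Rightarrow> ereal" and \<mu> :: real and xs :: 'a
  assumes f_deriv: "\<And>x. (f has_derivative (\<lambda>v. inner (g x) v)) (at x)"
    and g_lipschitz: "\<And>x y. norm (g x - g y) \<le> L * norm (x - y)"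
    and h_proper: "proper_fun h" and h_lsc: "lsc_efun h" and h_convex: "convex_efun h"
    and xs_min: "\<And>x. ereal (f xs) + h xs \<le> ereal (f x) + h x"
    and mu_pos: "\<mu> > 0"
    and PL: "is_PL \<mu> f g h xs"
begin

text \<open>Real-valued version of f + h. Off edom h it takes the junk value f x, because
  real_of_ereal \<infinity> = 0; it is only used on edom h.\<close>

definition F :: "'a \<Rightarrow> real" where
  "F x = f x + real_of_ereal (h x)"

lemma h_ereal: "h x < \<infinity> \<Longrightarrow> h x = ereal (real_of_ereal (h x))"
  by (rule proper_fun_ereal[OF h_proper])

lemma minimizer_in_edom: "h xs < \<infinity>"
proof -
  obtain x where "h x < \<infinity>" using h_proper unfolding proper_fun_def by auto
  then obtain r where "h x = ereal r" using h_ereal by blast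
  then have "ereal (f xs) + h xs \<le> ereal (f x + r)" using xs_min[of x] by simp
  then show ?thesis by (cases "h xs") auto
qed

lemma F_minimal:
  assumes "h x < \<infinity>"
  shows "F xs \<le> F x"
proof -
  obtain r s where "h x = ereal r" "h xs = ereal s"
    using h_ereal[OF assms] h_ereal[OF minimizer_in_edom] by blast
  then show ?thesis using xs_min[of x] by (simp add: F_def)
qed

text \<open>Completing the square shows that this point attains the infimum in the definition of
  D_h(x, \<mu>).\<close>

definition Dh_minimizer :: "'a \<Rightarrow> 'a" where
  "Dh_minimizer x = prox (1 / \<mu>) h (x - (1 / \<mu>) *\<^sub>R g x)"

lemma Dh_minimizer_in_edom: "h (Dh_minimizer x) < \<infinity>"
  unfolding Dh_minimizer_def using mu_pos by (intro prox_in_edom[OF h_proper h_lsc h_convex]) simp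

lemma PL_at_Dh_minimizer:
  assumes hx: "h x < \<infinity>"
  defines "y \<equiv> Dh_minimizer x"
  shows "F x - F xs \<le> real_of_ereal (h x) - real_of_ereal (h y)
                        - inner (g x) (y - x) - \<mu> / 2 * (norm (y - x))\<^sup>2"
proof -
  define z where "z = x - (1 / \<mu>) *\<^sub>R g x"
  obtain hx where hx_eq: "h x = ereal hx" using h_ereal[OF hx] by blast
  obtain hy where hy_eq: "h y = ereal hy"
    using h_ereal[OF Dh_minimizer_in_edom] unfolding y_def by blast
  define \<psi> where "\<psi> w = ereal (inner (g x) (w - x) + \<mu> / 2 * (norm (w - x))\<^sup>2) + h w - h x" for w
  have square: "(norm (w - z))\<^sup>2 / (2 * (1 / \<mu>))
      = inner (g x) (w - x) + \<mu> / 2 * (norm (w - x))\<^sup>2 + (norm (g x))\<^sup>2 / (2 * \<mu>)" for w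
  proof -
    have "w - z = (w - x) + (1 / \<mu>) *\<^sub>R g x" by (simp add: z_def)
    then have "(norm (w - z))\<^sup>2 = (norm (w - x))\<^sup>2 + 2 * (1 / \<mu>) * inner (w - x) (g x) + (1 / \<mu>)\<^sup>2 * (norm (g x))\<^sup>2"
      by (simp only: norm_add_square) (use mu_pos in \<open>simp add: power_mult_distrib power_divide\<close>)
    then show ?thesis using mu_pos by (simp add: field_simps inner_commute power2_eq_square)
  qed
  have y_min: "\<psi> y \<le> \<psi> w" for w
  proof -
    have "h y + ereal ((norm (y - z))\<^sup>2 / (2 * (1 / \<mu>))) \<le> h w + ereal ((norm (w - z))\<^sup>2 / (2 * (1 / \<mu>)))"
      unfolding y_def z_def Dh_minimizer_def
      by (rule prox_minimal[OF h_proper h_lsc h_convex]) (use mu_pos in simp)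
    then show ?thesis
      unfolding \<psi>_def square using hx_eq hy_eq h_proper unfolding proper_fun_def
      by (cases "h w") auto
  qed
  have "(INF w. \<psi> w) = \<psi> y"
    by (rule antisym) (auto intro: INF_lower INF_greatest y_min)
  then have "Dh g h x \<mu> = ereal (-2 * \<mu>) * \<psi> y"
    unfolding Dh_def \<psi>_def[symmetric] by simp
  moreover have "x \<in> edom h" using hx by (simp add: edom_def)
  ultimately have "ereal \<mu> * ((ereal (f x) + h x) - (ereal (f xs) + h xs))
      \<le> ereal (1/2) * (ereal (-2 * \<mu>) * \<psi> y)"
    using PL unfolding is_PL_def by auto
  moreover obtain hs where "h xs = ereal hs" using h_ereal[OF minimizer_in_edom] by blast
  ultimately have "\<mu> * (F x - F xs) \<le> \<mu> * (hx - hy - inner (g x) (y - x) - \<mu> / 2 * (norm (y - x))\<^sup>2)"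
    using hx_eq hy_eq by (simp add: \<psi>_def F_def algebra_simps)
  then show ?thesis using mu_pos hx_eq hy_eq by simp
qed

lemma optimal_if_PL_constant_exceeds_smoothness:
  assumes "L < \<mu>" and hx: "h x < \<infinity>"
  shows "F x \<le> F xs"
proof -
  define y where "y = Dh_minimizer x"
  have "F xs \<le> F y" unfolding y_def by (rule F_minimal[OF Dh_minimizer_in_edom])
  moreover have "f y \<le> f x + inner (g x) (y - x) + L / 2 * (norm (y - x))\<^sup>2"
    by (rule descent_lemma[OF f_deriv g_lipschitz])
  moreover note PL_at_Dh_minimizer[OF hx, folded y_def]
  ultimately have "(\<mu> - L) / 2 * (norm (y - x))\<^sup>2 \<le> 0"
    unfolding F_def by (simp add: field_simps)
  then have "y = x" using assms(1) by (simp add: mult_le_0_iff)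
  then show ?thesis using PL_at_Dh_minimizer[OF hx, folded y_def] by simp
qed

lemma prox_model_decrease:
  assumes hx: "h x < \<infinity>" and e: "e > 0" "e * L \<le> 1"
  obtains w where "h w < \<infinity>"
    and "real_of_ereal (h w) + inner (g x) (w - x) + (norm (w - x))\<^sup>2 / (2 * e)
         \<le> real_of_ereal (h x) - e * \<mu> * (F x - F xs)"
proof (cases "e * \<mu> \<le> 1")
  case True
  \<comment> \<open>move from x towards the D_h minimiser by the fraction e \<mu>\<close>
  define y where "y = Dh_minimizer x"
  define l where "l = e * \<mu>"
  define w where "w = (1 - l) *\<^sub>R x + l *\<^sub>R y"
  have l: "0 \<le> l" "l \<le> 1" using True e mu_pos by (auto simp: l_def)
  obtain hy where hy: "h y = ereal hy"
    using h_ereal[OF Dh_minimizer_in_edom] unfolding y_def by blast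
  have hx_eq: "h x = ereal (real_of_ereal (h x))" by (rule h_ereal[OF hx])
  have hw: "h w \<le> ereal ((1 - l) * real_of_ereal (h x) + l * hy)"
    unfolding w_def by (rule convex_efun_le[OF h_convex hx_eq hy l])
  then have hw_dom: "h w < \<infinity>" using le_less_trans by fastforce
  have hw_le: "real_of_ereal (h w) \<le> (1 - l) * real_of_ereal (h x) + l * hy"
    using hw h_ereal[OF hw_dom] by (metis ereal_less_eq(3))
  have "w - x = l *\<^sub>R (y - x)" by (simp add: w_def algebra_simps)
  then have "inner (g x) (w - x) + (norm (w - x))\<^sup>2 / (2 * e)
      = l * inner (g x) (y - x) + l\<^sup>2 / (2 * e) * (norm (y - x))\<^sup>2"
    using l by (simp add: power_mult_distrib)
  also have "l\<^sup>2 / (2 * e) = l * (\<mu> / 2)" using e by (simp add: l_def power2_eq_square)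
  finally have "inner (g x) (w - x) + (norm (w - x))\<^sup>2 / (2 * e)
      = l * (inner (g x) (y - x) + \<mu> / 2 * (norm (y - x))\<^sup>2)"
    by (simp add: distrib_left)
  moreover have "l * (F x - F xs)
      \<le> l * (real_of_ereal (h x) - hy - inner (g x) (y - x) - \<mu> / 2 * (norm (y - x))\<^sup>2)"
    using PL_at_Dh_minimizer[OF hx, folded y_def] hy l by (intro mult_left_mono) auto
  ultimately have "real_of_ereal (h w) + inner (g x) (w - x) + (norm (w - x))\<^sup>2 / (2 * e)
      \<le> real_of_ereal (h x) - e * \<mu> * (F x - F xs)"
    using hw_le by (simp add: l_def algebra_simps)
  then show ?thesis by (rule that[OF hw_dom])
next
  case False
  then have "L < \<mu>" using e by (smt (verit) mult_left_mono)
  then have "F x \<le> F xs" by (rule optimal_if_PL_constant_exceeds_smoothness[OF _ hx])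
  then have "0 \<le> - e * \<mu> * (F x - F xs)" using e mu_pos by (simp add: mult_nonneg_nonpos)
  then show ?thesis by (intro that[OF hx]) simp
qed

lemma prox_gradient_step:
  fixes v :: 'a
  assumes hx: "h x < \<infinity>" and e: "e > 0" "e * L \<le> 1"
  defines "x' \<equiv> prox e h (x - e *\<^sub>R v)"
  shows "F x' \<le> F x - e * \<mu> * (F x - F xs) + e / 2 * (norm (g x - v))\<^sup>2
                 - (1 / (2 * e) - L / 2) * (norm (x' - x))\<^sup>2"
proof -
  obtain w where hw: "h w < \<infinity>"
    and w: "real_of_ereal (h w) + inner (g x) (w - x) + (norm (w - x))\<^sup>2 / (2 * e)
            \<le> real_of_ereal (h x) - e * \<mu> * (F x - F xs)"
    using prox_model_decrease[OF hx e] by blast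
  define a where "a = x' - x"
  define c where "c = w - x"
  have "real_of_ereal (h x') + (norm (x' - (x - e *\<^sub>R v)))\<^sup>2 / (2 * e)
          + (norm (w - x'))\<^sup>2 / (2 * e)
        \<le> real_of_ereal (h w) + (norm (w - (x - e *\<^sub>R v)))\<^sup>2 / (2 * e)"
    unfolding x'_def by (rule prox_three_point[OF h_proper h_lsc h_convex e(1) h_ereal[OF hw]])
  moreover have "(norm (u + e *\<^sub>R v))\<^sup>2 / (2 * e) = (norm u)\<^sup>2 / (2 * e) + inner u v + e / 2 * (norm v)\<^sup>2"
    for u
    unfolding norm_add_square using e by (simp add: field_simps power2_eq_square)
  from this[of a] this[of c]
  have "(norm (x' - (x - e *\<^sub>R v)))\<^sup>2 / (2 * e) = (norm a)\<^sup>2 / (2 * e) + inner a v + e / 2 * (norm v)\<^sup>2"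
    and "(norm (w - (x - e *\<^sub>R v)))\<^sup>2 / (2 * e) = (norm c)\<^sup>2 / (2 * e) + inner c v + e / 2 * (norm v)\<^sup>2"
    by (simp_all add: a_def c_def algebra_simps)
  ultimately have three_point:
    "real_of_ereal (h x') + (norm a)\<^sup>2 / (2 * e) + inner a v + (norm (w - x'))\<^sup>2 / (2 * e)
     \<le> real_of_ereal (h w) + (norm c)\<^sup>2 / (2 * e) + inner c v"
    by linarith
  have descent: "f x' \<le> f x + inner (g x) a + L / 2 * (norm a)\<^sup>2"
    unfolding a_def by (rule descent_lemma[OF f_deriv g_lipschitz])
  \<comment> \<open>Young's inequality for the gradient error against the step w - x'\<close>
  have "0 \<le> (norm (e *\<^sub>R (v - g x) - (c - a)))\<^sup>2" by simp
  also have "\<dots> = e\<^sup>2 * (norm (v - g x))\<^sup>2 - 2 * e * inner (v - g x) (c - a) + (norm (c - a))\<^sup>2"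
    by (simp only: norm_diff_square[of "e *\<^sub>R (v - g x)"]) (simp add: power_mult_distrib)
  finally have "inner (v - g x) (c - a) \<le> e / 2 * (norm (g x - v))\<^sup>2 + (norm (w - x'))\<^sup>2 / (2 * e)"
    using e by (simp add: a_def c_def field_simps power2_eq_square norm_minus_commute)
  moreover have "inner (v - g x) (c - a) = inner c v - inner a v - inner (g x) c + inner (g x) a"
    by (simp add: inner_diff_left inner_diff_right inner_commute)
  ultimately show ?thesis
    using three_point descent w unfolding F_def a_def[symmetric] c_def[symmetric]
    by (simp add: algebra_simps)
qed

definition gap :: "'a \<Rightarrow> ennreal" where
  "gap x = e2ennreal ((ereal (f x) + h x) - (ereal (f xs) + h xs))"

lemma gap_eq:
  assumes "h x < \<infinity>"
  shows "gap x = ennreal (F x - F xs)"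
proof -
  obtain r s where "h x = ereal r" "h xs = ereal s"
    using h_ereal[OF assms] h_ereal[OF minimizer_in_edom] by blast
  then show ?thesis by (simp add: gap_def F_def e2ennreal_ereal)
qed

lemma gap_top: "\<not> h x < \<infinity> \<Longrightarrow> gap x = \<top>"
  using h_ereal[OF minimizer_in_edom] by (simp add: gap_def e2ennreal_infty)

end

section \<open>Minibatches drawn with replacement\<close>

lemma expectation_bind_pmf_finite:
  fixes g :: "'b \<Rightarrow> real"
  assumes "finite (set_pmf p)" and "\<And>x. x \<in> set_pmf p \<Longrightarrow> finite (set_pmf (f x))"
  shows "measure_pmf.expectation (p \<bind> f) g
         = measure_pmf.expectation p (\<lambda>x. measure_pmf.expectation (f x) g)"
proof -
  have "measure_pmf.expectation (p \<bind> f) g = (\<Sum>a\<in>set_pmf p. pmf p a *\<^sub>R measure_pmf.expectation (f a) g)"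
    using assms by (intro pmf_expectation_bind) auto
  also have "\<dots> = measure_pmf.expectation p (\<lambda>x. measure_pmf.expectation (f x) g)"
    using assms(1) by (subst integral_measure_pmf) auto
  finally show ?thesis .
qed

lemma expectation_mono_finite:
  fixes f g :: "'a \<Rightarrow> real"
  assumes "finite (set_pmf p)" and "\<And>x. x \<in> set_pmf p \<Longrightarrow> f x \<le> g x"
  shows "measure_pmf.expectation p f \<le> measure_pmf.expectation p g"
  using assms by (intro integral_mono_AE) (auto simp: integrable_measure_pmf_finite AE_measure_pmf_iff)

lemma draw_indices_Suc_map:
  "draw_indices n (Suc k) = pmf_of_set {1..n} \<bind> (\<lambda>i. map_pmf (Cons i) (draw_indices n k))"
  by (simp add: map_pmf_def)

lemma set_pmf_draw_indices:
  assumes "n \<ge> 1" and "l \<in> set_pmf (draw_indices n k)"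
  shows "length l = k \<and> set l \<subseteq> {1..n}"
  using assms(2)
proof (induction k arbitrary: l)
  case (Suc k)
  then show ?case
    using assms(1) unfolding draw_indices_Suc_map by (auto simp: set_pmf_of_set dest!: Suc.IH)
qed simp

lemma finite_set_pmf_draw_indices:
  assumes "n \<ge> 1"
  shows "finite (set_pmf (draw_indices n k))"
proof (rule finite_subset)
  show "set_pmf (draw_indices n k) \<subseteq> {l. set l \<subseteq> {1..n} \<and> length l = k}"
    using set_pmf_draw_indices[OF assms] by auto
qed (simp add: finite_lists_length_eq)

lemma expectation_draw_indices_Suc:
  fixes g :: "nat list \<Rightarrow> real"
  assumes "n \<ge> 1"
  shows "measure_pmf.expectation (draw_indices n (Suc k)) g
       = (\<Sum>j=1..n. measure_pmf.expectation (draw_indices n k) (\<lambda>J. g (j # J))) / real n"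
proof -
  have "measure_pmf.expectation (draw_indices n (Suc k)) g
      = (\<Sum>j\<in>{1..n}. measure_pmf.expectation (map_pmf (Cons j) (draw_indices n k)) g /\<^sub>R real (card {1..n}))"
    unfolding draw_indices_Suc_map using assms finite_set_pmf_draw_indices[OF assms]
    by (intro pmf_expectation_bind_pmf_of_set) auto
  then show ?thesis by (simp add: sum_divide_distrib divide_inverse_commute sum_distrib_left)
qed

lemma expectation_not_drawn:
  assumes n: "n \<ge> 1" and i: "i \<in> {1..n}"
  shows "measure_pmf.expectation (draw_indices n k) (\<lambda>J. if i \<in> set J then 0 else 1)
         = (1 - 1 / real n) ^ k"
proof (induction k)
  case (Suc k)
  have "measure_pmf.expectation (draw_indices n (Suc k)) (\<lambda>J. if i \<in> set J then 0 else 1)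
      = (\<Sum>j=1..n. if j = i then 0 else (1 - 1 / real n) ^ k) / real n"
    unfolding expectation_draw_indices_Suc[OF n]
    by (intro arg_cong[where f = "\<lambda>x. x / real n"] sum.cong) (auto simp: Suc.IH)
  also have "(\<Sum>j=1..n. if j = i then 0 else (1 - 1 / real n) ^ k)
      = (\<Sum>j\<in>{1..n} - {i}. (1 - 1 / real n) ^ k)"
    by (rule sum.mono_neutral_cong_right) auto
  also have "\<dots> = (real n - 1) * (1 - 1 / real n) ^ k" using i n by (simp add: of_nat_diff)
  also have "\<dots> / real n = (1 - 1 / real n) ^ Suc k" using n by (simp add: field_simps)
  finally show ?case .
qed simp

lemma expectation_norm_sum_draw_indices:
  fixes Z :: "nat \<Rightarrow> 'a::real_inner"
  assumes n: "n \<ge> 1" and centered: "(\<Sum>j=1..n. Z j) = 0"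
  shows "measure_pmf.expectation (draw_indices n k) (\<lambda>J. (norm (sum_list (map Z J)))\<^sup>2)
       = real k * (\<Sum>j=1..n. (norm (Z j))\<^sup>2) / real n"
proof (induction k)
  case (Suc k)
  define P where "P = draw_indices n k"
  define S where "S J = sum_list (map Z J)" for J
  have int: "integrable (measure_pmf P) f" for f :: "nat list \<Rightarrow> real"
    unfolding P_def by (rule integrable_measure_pmf_finite[OF finite_set_pmf_draw_indices[OF n]])
  have step: "measure_pmf.expectation P (\<lambda>J. (norm (S (j # J)))\<^sup>2)
      = (norm (Z j))\<^sup>2 + 2 * measure_pmf.expectation P (\<lambda>J. inner (Z j) (S J))
        + measure_pmf.expectation P (\<lambda>J. (norm (S J))\<^sup>2)" for j
    using int by (simp add: S_def norm_add_square integral_add integral_mult_right)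
  \<comment> \<open>the cross terms vanish because Z is centered\<close>
  have "(\<Sum>j=1..n. measure_pmf.expectation P (\<lambda>J. inner (Z j) (S J)))
      = measure_pmf.expectation P (\<lambda>J. inner (\<Sum>j=1..n. Z j) (S J))"
    using int by (simp add: integral_sum inner_sum_left)
  then have "(\<Sum>j=1..n. measure_pmf.expectation P (\<lambda>J. inner (Z j) (S J))) = 0"
    using centered by simp
  then have "measure_pmf.expectation (draw_indices n (Suc k)) (\<lambda>J. (norm (S J))\<^sup>2)
      = ((\<Sum>j=1..n. (norm (Z j))\<^sup>2) + real n * measure_pmf.expectation P (\<lambda>J. (norm (S J))\<^sup>2)) / real n"
    unfolding expectation_draw_indices_Suc[OF n] P_def[symmetric] step
    by (simp add: sum.distrib sum_distrib_left[symmetric])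
  then show ?case using Suc.IH n unfolding S_def P_def by (simp add: field_simps)
qed simp

lemma one_minus_inverse_power_le:
  assumes "n \<ge> 1"
  shows "(1 - 1 / real n) ^ b \<le> real n / (real n + real b)"
proof -
  have n: "real n \<ge> 1" using assms by simp
  have nonneg: "0 \<le> 1 - 1 / real n" using n by simp
  \<comment> \<open>Bernoulli's inequality for 1 + 1/n, and (1 - 1/n)(1 + 1/n) \<le> 1\<close>
  have "0 \<le> 1 / real n" by simp
  then have "1 + real b * (1 / real n) \<le> (1 + 1 / real n) ^ b"
    by (intro Bernoulli_inequality) linarith
  then have "(1 - 1 / real n) ^ b * (1 + real b * (1 / real n))
      \<le> (1 - 1 / real n) ^ b * (1 + 1 / real n) ^ b"
    using nonneg by (intro mult_left_mono) auto
  also have "\<dots> = ((1 - 1 / real n) * (1 + 1 / real n)) ^ b" by (simp add: power_mult_distrib)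
  also have "\<dots> \<le> 1"
    using n mult_mono[OF n n] by (intro power_le_one) (simp_all add: field_simps)
  finally have "(1 - 1 / real n) ^ b * ((real n + real b) / real n) \<le> 1"
    using n by (simp add: field_simps)
  then show ?thesis using n by (simp add: field_simps)
qed

lemma norm_add_square_le:
  fixes a d :: "'a::real_inner"
  assumes "\<beta> > 0"
  shows "(norm (a + d))\<^sup>2 \<le> (1 + \<beta>) * (norm a)\<^sup>2 + (1 + 1 / \<beta>) * (norm d)\<^sup>2"
proof -
  have "0 \<le> (norm (\<beta> *\<^sub>R a - d))\<^sup>2" by simp
  also have "\<dots> = \<beta>\<^sup>2 * (norm a)\<^sup>2 - 2 * \<beta> * inner a d + (norm d)\<^sup>2"
    by (simp only: norm_diff_square[of "\<beta> *\<^sub>R a" d]) (use assms in \<open>simp add: power_mult_distrib\<close>)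
  finally have "2 * inner a d \<le> \<beta> * (norm a)\<^sup>2 + (norm d)\<^sup>2 / \<beta>"
    using assms by (simp add: field_simps power2_eq_square)
  then show ?thesis by (simp add: norm_add_square algebra_simps add_divide_distrib)
qed

section \<open>Lyapunov analysis of ProxSAGA\<close>

lemma sum_norm_square_sub_mean_le:
  fixes W :: "nat \<Rightarrow> 'a::real_inner"
  assumes "n \<ge> 1"
  defines "m \<equiv> (1 / real n) *\<^sub>R (\<Sum>i=1..n. W i)"
  shows "(\<Sum>j=1..n. (norm (W j - m))\<^sup>2) \<le> (\<Sum>j=1..n. (norm (W j))\<^sup>2)"
proof -
  have sum_W: "(\<Sum>j=1..n. W j) = real n *\<^sub>R m" using assms by (simp add: m_def)
  have "(\<Sum>j=1..n. (norm (W j - m))\<^sup>2)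
      = (\<Sum>j=1..n. (norm (W j))\<^sup>2) - 2 * inner (\<Sum>j=1..n. W j) m + real n * (norm m)\<^sup>2"
    by (simp add: norm_diff_square sum.distrib sum_subtractf inner_sum_left sum_distrib_left)
  also have "\<dots> = (\<Sum>j=1..n. (norm (W j))\<^sup>2) - real n * (norm m)\<^sup>2"
    unfolding sum_W by (simp add: power2_norm_eq_inner)
  finally show ?thesis by simp
qed

lemma sum_list_map_diff_const:
  fixes W :: "nat \<Rightarrow> 'a::real_vector"
  shows "sum_list (map (\<lambda>i. W i - m) I) = sum_list (map W I) - real (length I) *\<^sub>R m"
  by (induction I) (auto simp: algebra_simps)

locale finite_sum_smooth =
  fixes n :: nat and fs :: "nat \<Rightarrow> 'a::real_inner \<Rightarrow> real" and gf :: "nat \<Rightarrow> 'a \<Rightarrow> 'a" and L :: real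
  assumes n_pos: "n \<ge> 1"
    and fs_deriv: "\<And>i x. i \<in> {1..n} \<Longrightarrow> (fs i has_derivative (\<lambda>v. inner (gf i x) v)) (at x)"
    and gf_lipschitz: "\<And>i x y. i \<in> {1..n} \<Longrightarrow> norm (gf i x - gf i y) \<le> L * norm (x - y)"
begin

definition avg_f :: "'a \<Rightarrow> real" where
  "avg_f x = (1 / real n) * (\<Sum>i=1..n. fs i x)"

definition avg_grad :: "'a \<Rightarrow> 'a" where
  "avg_grad x = (1 / real n) *\<^sub>R (\<Sum>i=1..n. gf i x)"

lemma integrable_draw_indices [simp]:
  "integrable (measure_pmf (draw_indices n k)) (f :: nat list \<Rightarrow> real)"
  by (rule integrable_measure_pmf_finite[OF finite_set_pmf_draw_indices[OF n_pos]])

lemma avg_f_has_derivative: "(avg_f has_derivative (\<lambda>v. inner (avg_grad x) v)) (at x)"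
proof -
  have "((\<lambda>x. \<Sum>i=1..n. fs i x) has_derivative (\<lambda>v. \<Sum>i=1..n. inner (gf i x) v)) (at x)"
    by (intro has_derivative_sum fs_deriv) auto
  then have "(avg_f has_derivative (\<lambda>v. (1 / real n) * (\<Sum>i=1..n. inner (gf i x) v))) (at x)"
    unfolding avg_f_def[abs_def] by (rule has_derivative_mult_right)
  moreover have "(\<lambda>v. (1 / real n) * (\<Sum>i=1..n. inner (gf i x) v)) = (\<lambda>v. inner (avg_grad x) v)"
    by (auto simp: avg_grad_def inner_sum_left)
  ultimately show ?thesis by simp
qed

lemma avg_grad_lipschitz: "norm (avg_grad x - avg_grad y) \<le> L * norm (x - y)"
proof -
  have "norm (avg_grad x - avg_grad y) = (1 / real n) * norm (\<Sum>i=1..n. gf i x - gf i y)"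
    by (simp add: avg_grad_def sum_subtractf flip: scaleR_diff_right)
  also have "\<dots> \<le> (1 / real n) * (\<Sum>i=1..n. L * norm (x - y))"
    by (intro mult_left_mono order.trans[OF norm_sum sum_mono] gf_lipschitz) auto
  also have "\<dots> = L * norm (x - y)" using n_pos by simp
  finally show ?thesis .
qed

text \<open>The error of the SAGA estimator is 1/b times a sum of b independent centred samples of
  the gradient differences gf i x - gf i (\<alpha> i), so its second moment is 1/b times their spread.\<close>

lemma saga_estimator_variance:
  fixes x :: 'a and \<alpha> :: "nat \<Rightarrow> 'a" and b :: nat
  assumes b: "b \<ge> 1"
  defines "v I \<equiv> (1 / real b) *\<^sub>R sum_list (map (\<lambda>i. gf i x - gf i (\<alpha> i)) I)
                   + (1 / real n) *\<^sub>R (\<Sum>i=1..n. gf i (\<alpha> i))"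
  shows "measure_pmf.expectation (draw_indices n b) (\<lambda>I. (norm (avg_grad x - v I))\<^sup>2)
         \<le> L\<^sup>2 / real b * ((1 / real n) * (\<Sum>i=1..n. (norm (x - \<alpha> i))\<^sup>2))"
proof -
  define W where "W i = gf i x - gf i (\<alpha> i)" for i
  define m where "m = (1 / real n) *\<^sub>R (\<Sum>i=1..n. W i)"
  define Z where "Z i = W i - m" for i
  have "(\<Sum>j=1..n. Z j) = (\<Sum>j=1..n. W j) - real n *\<^sub>R m"
    by (simp only: Z_def sum_subtractf sum_constant_scaleR card_atLeastAtMost) simp
  then have centered: "(\<Sum>j=1..n. Z j) = 0"
    using n_pos by (simp add: m_def)
  have error: "(norm (avg_grad x - v I))\<^sup>2 = (1 / real b)\<^sup>2 * (norm (sum_list (map Z I)))\<^sup>2"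
    if "I \<in> set_pmf (draw_indices n b)" for I
  proof -
    have "length I = b" using set_pmf_draw_indices[OF n_pos that] by simp
    then have "sum_list (map Z I) = sum_list (map W I) - real b *\<^sub>R m"
      unfolding Z_def by (simp add: sum_list_map_diff_const)
    then have "(1 / real b) *\<^sub>R sum_list (map Z I) = (1 / real b) *\<^sub>R sum_list (map W I) - m"
      using b by (simp add: scaleR_diff_right)
    moreover have "m = avg_grad x - (1 / real n) *\<^sub>R (\<Sum>i=1..n. gf i (\<alpha> i))"
      by (simp add: m_def W_def avg_grad_def sum_subtractf scaleR_diff_right)
    ultimately have "avg_grad x - v I = - ((1 / real b) *\<^sub>R sum_list (map Z I))"
      by (simp add: v_def W_def[abs_def])
    then show ?thesis by (simp add: power_mult_distrib power_divide)
  qed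
  have "measure_pmf.expectation (draw_indices n b) (\<lambda>I. (norm (avg_grad x - v I))\<^sup>2)
      = (1 / real b)\<^sup>2 * (real b * (\<Sum>j=1..n. (norm (Z j))\<^sup>2) / real n)"
    by (simp add: integral_cong_AE[OF _ _ AE_pmfI[OF error]]
        expectation_norm_sum_draw_indices[OF n_pos centered])
  also have "\<dots> = (\<Sum>j=1..n. (norm (Z j))\<^sup>2) / (real b * real n)"
    using b by (simp add: power2_eq_square field_simps)
  also have "\<dots> \<le> (\<Sum>j=1..n. (norm (W j))\<^sup>2) / (real b * real n)"
    unfolding Z_def m_def by (intro divide_right_mono sum_norm_square_sub_mean_le n_pos) simp
  also have "\<dots> \<le> (\<Sum>j=1..n. L\<^sup>2 * (norm (x - \<alpha> j))\<^sup>2) / (real b * real n)"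
    unfolding W_def power_mult_distrib[symmetric]
    by (intro divide_right_mono sum_mono power_mono gf_lipschitz) auto
  also have "\<dots> = L\<^sup>2 / real b * ((1 / real n) * (\<Sum>i=1..n. (norm (x - \<alpha> i))\<^sup>2))"
    by (simp add: sum_distrib_left[symmetric] field_simps)
  finally show ?thesis .
qed

end

locale prox_saga_PL =
  finite_sum_smooth n fs gf L +
  composite_PL "finite_sum_smooth.avg_f n fs" "finite_sum_smooth.avg_grad n gf" L h \<mu> xs
  for n and fs :: "nat \<Rightarrow> 'a::euclidean_space \<Rightarrow> real" and gf L h \<mu> xs +
  fixes b :: nat and \<rho> :: real
  assumes L_pos: "L > 0" and b_pos: "b \<ge> 1" and b_le: "b \<le> n"
    and rho_pos: "\<rho> > 0" and rho_le: "\<rho> \<le> 1/5"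
    and rho_cond: "16 * (real n)\<^sup>2 * \<rho>\<^sup>2 / (real b)^3 + \<rho> \<le> 1"
begin

definition \<eta> :: real where
  "\<eta> = \<rho> / L"

text \<open>Parameters of the Lyapunov function F x + c * dispersion (x, \<alpha>): the weight c, the Young
  parameter \<beta> used to compare x' - \<alpha> i with x - \<alpha> i, and the probability q that a fixed
  memory slot is not refreshed by a minibatch of size b.\<close>

definition c :: real where
  "c = 2 * real n * \<eta> * L\<^sup>2 / (real b)\<^sup>2"

definition \<beta> :: real where
  "\<beta> = 2 * real n / real b"

definition q :: real where
  "q = (1 - 1 / real n) ^ b"

definition dispersion :: "'a \<times> (nat \<Rightarrow> 'a) \<Rightarrow> real" where
  "dispersion s = (1 / real n) * (\<Sum>i=1..n. (norm (fst s - snd s i))\<^sup>2)"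

definition lyapunov :: "'a \<times> (nat \<Rightarrow> 'a) \<Rightarrow> real" where
  "lyapunov s = F (fst s) + c * dispersion s"

lemma eta_pos: "\<eta> > 0"
  using rho_pos L_pos by (simp add: \<eta>_def)

lemma eta_L_le_1: "\<eta> * L \<le> 1"
  using rho_le L_pos by (simp add: \<eta>_def)

lemma c_nonneg: "c \<ge> 0"
  using eta_pos by (simp add: c_def)

lemma dispersion_nonneg: "dispersion s \<ge> 0"
  by (simp add: dispersion_def sum_nonneg)

lemma c_le_prox_curvature: "c * (1 + \<beta>) \<le> 1 / (2 * \<eta>) - L / 2"
proof -
  have B: "real b > 0" using b_pos by simp
  have "c * (1 + \<beta>) \<le> c * (3 * real n / real b)"
    using b_le B c_nonneg by (intro mult_left_mono) (simp_all add: \<beta>_def field_simps)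
  also have "\<dots> = L / (2 * \<rho>) * (12 * (real n)\<^sup>2 * \<rho>\<^sup>2 / (real b)^3)"
    using rho_pos L_pos B by (simp add: c_def \<eta>_def field_simps power2_eq_square power3_eq_cube)
  also have "\<dots> \<le> L / (2 * \<rho>) * (1 - \<rho>)"
  proof (rule mult_left_mono)
    have "12 * (real n)\<^sup>2 * \<rho>\<^sup>2 / (real b)^3 \<le> 16 * (real n)\<^sup>2 * \<rho>\<^sup>2 / (real b)^3"
      using B by (simp add: divide_right_mono)
    then show "12 * (real n)\<^sup>2 * \<rho>\<^sup>2 / (real b)^3 \<le> 1 - \<rho>" using rho_cond by linarith
  qed (use L_pos rho_pos in simp)
  also have "\<dots> = 1 / (2 * \<eta>) - L / 2" using rho_pos L_pos by (simp add: \<eta>_def field_simps)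
  finally show ?thesis .
qed

lemma variance_and_memory_le_c: "\<eta> * L\<^sup>2 / (2 * real b) + c * (1 + 1 / \<beta>) * q \<le> c"
proof -
  have N: "real n > 0" and B: "real b > 0" using n_pos b_pos by auto
  have q: "0 \<le> q" "q \<le> real n / (real n + real b)"
    using one_minus_inverse_power_le[OF n_pos] n_pos by (auto simp: q_def)
  have "c * (1 + 1 / \<beta>) * q \<le> c * ((2 * real n + real b) / (2 * real n)) * (real n / (real n + real b))"
    using q c_nonneg N B by (intro mult_mono) (simp_all add: \<beta>_def field_simps)
  also have "\<dots> = c * ((2 * real n + real b) / (2 * real n) * (real n / (real n + real b)))"
    by (simp only: mult.assoc)
  also have "(2 * real n + real b) / (2 * real n) * (real n / (real n + real b))
      = ((2 * real n + real b) * real n) / ((2 * (real n + real b)) * real n)"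
    unfolding times_divide_times_eq by (simp add: algebra_simps)
  also have "\<dots> = (2 * real n + real b) / (2 * (real n + real b))"
    using N by (intro mult_divide_mult_cancel_right) simp
  also have "\<dots> = 1 - real b / (2 * (real n + real b))"
    using N B by (simp add: field_simps)
  also have "c * \<dots> = c - c * real b / (2 * (real n + real b))"
    by (simp add: right_diff_distrib)
  also have "\<dots> \<le> c - c * real b / (4 * real n)"
    using c_nonneg N B b_le by (simp add: frac_le mult_left_mono divide_left_mono)
  also have "c * real b / (4 * real n) = \<eta> * L\<^sup>2 / (2 * real b)"
    using N B L_pos by (simp add: c_def field_simps power2_eq_square)
  finally show ?thesis by simp
qed

lemma saga_step_eq:
  "saga_step n b \<eta> gf h (x, \<alpha>) =
     draw_indices n b \<bind> (\<lambda>I. draw_indices n b \<bind> (\<lambda>J.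
        return_pmf (prox \<eta> h (x - \<eta> *\<^sub>R ((1 / real b) *\<^sub>R sum_list (map (\<lambda>i. gf i x - gf i (\<alpha> i)) I)
                                     + (1 / real n) *\<^sub>R (\<Sum>i=1..n. gf i (\<alpha> i)))),
                    (\<lambda>j. if j \<in> set J then x else \<alpha> j))))"
  by (simp add: saga_step_def Let_def)

lemma finite_set_pmf_saga_step: "finite (set_pmf (saga_step n b \<eta> gf h s))"
  using finite_set_pmf_draw_indices[OF n_pos] by (cases s) (simp add: saga_step_eq)

lemma saga_step_in_edom: "s' \<in> set_pmf (saga_step n b \<eta> gf h s) \<Longrightarrow> h (fst s') < \<infinity>"
  using prox_in_edom[OF h_proper h_lsc h_convex eta_pos] by (cases s) (auto simp: saga_step_eq)

lemma expected_dispersion_after_refresh: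
  "measure_pmf.expectation (draw_indices n b) (\<lambda>J. dispersion (x', \<lambda>j. if j \<in> set J then x else \<alpha> j))
   \<le> (1 + \<beta>) * (norm (x' - x))\<^sup>2 + (1 + 1 / \<beta>) * q * dispersion (x, \<alpha>)"
proof -
  have \<beta>: "\<beta> > 0" using b_pos n_pos by (simp add: \<beta>_def)
  define stale where "stale i J = (if i \<in> set J then 0 else 1 :: real)" for i :: nat and J
  define C where "C i = (1 + 1 / \<beta>) * (norm (x - \<alpha> i))\<^sup>2" for i
  have slot: "(norm (x' - (if i \<in> set J then x else \<alpha> i)))\<^sup>2
      \<le> (1 + \<beta>) * (norm (x' - x))\<^sup>2 + stale i J * C i" for i J
  proof (cases "i \<in> set J")
    case False
    then show ?thesis
      using norm_add_square_le[OF \<beta>, of "x' - x" "x - \<alpha> i"] by (simp add: stale_def C_def)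
  qed (use \<beta> in \<open>simp add: stale_def algebra_simps\<close>)
  have "measure_pmf.expectation (draw_indices n b) (\<lambda>J. dispersion (x', \<lambda>j. if j \<in> set J then x else \<alpha> j))
      \<le> measure_pmf.expectation (draw_indices n b)
           (\<lambda>J. (1 / real n) * (\<Sum>i=1..n. (1 + \<beta>) * (norm (x' - x))\<^sup>2 + stale i J * C i))"
    unfolding dispersion_def
    by (intro expectation_mono_finite finite_set_pmf_draw_indices n_pos mult_left_mono sum_mono)
       (simp_all add: slot)
  also have "\<dots> = (1 / real n) * (\<Sum>i=1..n. (1 + \<beta>) * (norm (x' - x))\<^sup>2
                     + measure_pmf.expectation (draw_indices n b) (stale i) * C i)"
    by (simp add: Bochner_Integration.integral_sum)
  also have "\<dots> = (1 / real n) * (\<Sum>i=1..n. (1 + \<beta>) * (norm (x' - x))\<^sup>2 + q * C i)"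
    by (intro arg_cong[where f = "\<lambda>t. (1 / real n) * t"] sum.cong refl)
       (simp add: stale_def[abs_def] expectation_not_drawn[OF n_pos] q_def)
  also have "(\<Sum>i=1..n. (1 + \<beta>) * (norm (x' - x))\<^sup>2 + q * C i)
      = real n * ((1 + \<beta>) * (norm (x' - x))\<^sup>2) + q * (1 + 1 / \<beta>) * (\<Sum>i=1..n. (norm (x - \<alpha> i))\<^sup>2)"
    by (simp add: sum.distrib C_def sum_distrib_left mult.assoc)
  also have "(1 / real n) * \<dots> = (1 + \<beta>) * (norm (x' - x))\<^sup>2 + (1 + 1 / \<beta>) * q * dispersion (x, \<alpha>)"
    using n_pos by (simp add: dispersion_def field_simps)
  finally show ?thesis .
qed

lemma expected_lyapunov_after_memory_refresh:
  fixes v :: 'a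
  assumes hx: "h x < \<infinity>"
  defines "x' \<equiv> prox \<eta> h (x - \<eta> *\<^sub>R v)"
  shows "measure_pmf.expectation (draw_indices n b)
           (\<lambda>J. lyapunov (x', \<lambda>j. if j \<in> set J then x else \<alpha> j))
         \<le> F x - \<eta> * \<mu> * (F x - F xs) + \<eta> / 2 * (norm (avg_grad x - v))\<^sup>2
            + c * ((1 + 1 / \<beta>) * q * dispersion (x, \<alpha>))"
proof -
  have "measure_pmf.expectation (draw_indices n b) (\<lambda>J. lyapunov (x', \<lambda>j. if j \<in> set J then x else \<alpha> j))
      = F x' + c * measure_pmf.expectation (draw_indices n b)
                     (\<lambda>J. dispersion (x', \<lambda>j. if j \<in> set J then x else \<alpha> j))"
    by (simp add: lyapunov_def)
  also have "\<dots> \<le> F x' + c * ((1 + \<beta>) * (norm (x' - x))\<^sup>2 + (1 + 1 / \<beta>) * q * dispersion (x, \<alpha>))"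
    using expected_dispersion_after_refresh c_nonneg by (intro add_left_mono mult_left_mono) auto
  also have "\<dots> \<le> F x - \<eta> * \<mu> * (F x - F xs) + \<eta> / 2 * (norm (avg_grad x - v))\<^sup>2
                   + c * ((1 + 1 / \<beta>) * q * dispersion (x, \<alpha>))"
  proof -
    have "F x' \<le> F x - \<eta> * \<mu> * (F x - F xs) + \<eta> / 2 * (norm (avg_grad x - v))\<^sup>2
                 - (1 / (2 * \<eta>) - L / 2) * (norm (x' - x))\<^sup>2"
      unfolding x'_def by (rule prox_gradient_step[OF hx eta_pos eta_L_le_1])
    moreover have "c * (1 + \<beta>) * (norm (x' - x))\<^sup>2 \<le> (1 / (2 * \<eta>) - L / 2) * (norm (x' - x))\<^sup>2"
      using c_le_prox_curvature by (rule mult_right_mono) simp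
    ultimately show ?thesis by (simp add: algebra_simps)
  qed
  finally show ?thesis .
qed

lemma lyapunov_step:
  assumes hx: "h x < \<infinity>"
  shows "measure_pmf.expectation (saga_step n b \<eta> gf h (x, \<alpha>)) lyapunov
         \<le> lyapunov (x, \<alpha>) - \<eta> * \<mu> * (F x - F xs)"
proof -
  define v where "v I = (1 / real b) *\<^sub>R sum_list (map (\<lambda>i. gf i x - gf i (\<alpha> i)) I)
                        + (1 / real n) *\<^sub>R (\<Sum>i=1..n. gf i (\<alpha> i))" for I
  define D where "D = (1 + 1 / \<beta>) * q * dispersion (x, \<alpha>)"
  have fin: "finite (set_pmf (draw_indices n b))" by (rule finite_set_pmf_draw_indices[OF n_pos])
  have "measure_pmf.expectation (saga_step n b \<eta> gf h (x, \<alpha>)) lyapunov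
      = measure_pmf.expectation (draw_indices n b) (\<lambda>I. measure_pmf.expectation (draw_indices n b)
          (\<lambda>J. lyapunov (prox \<eta> h (x - \<eta> *\<^sub>R v I), \<lambda>j. if j \<in> set J then x else \<alpha> j)))"
    unfolding saga_step_eq v_def using fin by (simp add: expectation_bind_pmf_finite)
  also have "\<dots> \<le> measure_pmf.expectation (draw_indices n b)
      (\<lambda>I. F x - \<eta> * \<mu> * (F x - F xs) + \<eta> / 2 * (norm (avg_grad x - v I))\<^sup>2 + c * D)"
    unfolding D_def by (intro expectation_mono_finite[OF fin] expected_lyapunov_after_memory_refresh hx)
  also have "\<dots> = F x - \<eta> * \<mu> * (F x - F xs)
      + \<eta> / 2 * measure_pmf.expectation (draw_indices n b) (\<lambda>I. (norm (avg_grad x - v I))\<^sup>2) + c * D"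
    by simp
  also have "\<dots> \<le> F x - \<eta> * \<mu> * (F x - F xs) + \<eta> / 2 * (L\<^sup>2 / real b * dispersion (x, \<alpha>)) + c * D"
    using saga_estimator_variance[OF b_pos, of x \<alpha>] eta_pos
    unfolding v_def dispersion_def by (intro add_right_mono add_left_mono mult_left_mono) auto
  also have "\<dots> \<le> F x - \<eta> * \<mu> * (F x - F xs) + c * dispersion (x, \<alpha>)"
    using mult_right_mono[OF variance_and_memory_le_c dispersion_nonneg[of "(x, \<alpha>)"]]
    by (simp add: D_def algebra_simps)
  finally show ?thesis by (simp add: lyapunov_def)
qed

lemma finite_set_pmf_saga_iter: "finite (set_pmf (saga_iter n b \<eta> gf h x0 t))"
  by (induction t) (auto simp: finite_set_pmf_saga_step)

lemma saga_iter_in_edom: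
  assumes "h x0 < \<infinity>" and "s \<in> set_pmf (saga_iter n b \<eta> gf h x0 t)"
  shows "h (fst s) < \<infinity>"
  using assms by (cases t) (auto dest: saga_step_in_edom)

lemma lyapunov_iter_step:
  assumes hx0: "h x0 < \<infinity>"
  shows "measure_pmf.expectation (saga_iter n b \<eta> gf h x0 (Suc t)) lyapunov
       \<le> measure_pmf.expectation (saga_iter n b \<eta> gf h x0 t) lyapunov
         - \<eta> * \<mu> * measure_pmf.expectation (saga_iter n b \<eta> gf h x0 t) (\<lambda>s. F (fst s) - F xs)"
proof -
  let ?P = "saga_iter n b \<eta> gf h x0 t"
  have int: "integrable (measure_pmf ?P) f" for f :: "_ \<Rightarrow> real"
    by (rule integrable_measure_pmf_finite[OF finite_set_pmf_saga_iter])
  have "measure_pmf.expectation (saga_iter n b \<eta> gf h x0 (Suc t)) lyapunov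
      = measure_pmf.expectation ?P (\<lambda>s. measure_pmf.expectation (saga_step n b \<eta> gf h s) lyapunov)"
    by (simp add: expectation_bind_pmf_finite finite_set_pmf_saga_iter finite_set_pmf_saga_step)
  also have "\<dots> \<le> measure_pmf.expectation ?P (\<lambda>s. lyapunov s - \<eta> * \<mu> * (F (fst s) - F xs))"
  proof (rule expectation_mono_finite[OF finite_set_pmf_saga_iter])
    fix s assume "s \<in> set_pmf ?P"
    then have "h (fst s) < \<infinity>" by (rule saga_iter_in_edom[OF hx0])
    then show "measure_pmf.expectation (saga_step n b \<eta> gf h s) lyapunov
        \<le> lyapunov s - \<eta> * \<mu> * (F (fst s) - F xs)"
      using lyapunov_step by (cases s) simp
  qed
  also have "\<dots> = measure_pmf.expectation ?P lyapunov
      - \<eta> * \<mu> * measure_pmf.expectation ?P (\<lambda>s. F (fst s) - F xs)"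
    using int by simp
  finally show ?thesis .
qed

lemma expected_gap_sum_le:
  assumes hx0: "h x0 < \<infinity>"
  shows "\<eta> * \<mu> * (\<Sum>t<T. measure_pmf.expectation (saga_iter n b \<eta> gf h x0 t) (\<lambda>s. F (fst s) - F xs))
         \<le> F x0 - F xs"
proof -
  have telescope: "measure_pmf.expectation (saga_iter n b \<eta> gf h x0 T) lyapunov
      + \<eta> * \<mu> * (\<Sum>t<T. measure_pmf.expectation (saga_iter n b \<eta> gf h x0 t) (\<lambda>s. F (fst s) - F xs))
      \<le> F x0"
  proof (induction T)
    case 0
    then show ?case by (simp add: lyapunov_def dispersion_def)
  next
    case (Suc T)
    then show ?case using lyapunov_iter_step[OF hx0, of T] by (simp add: algebra_simps)
  qed
  have "measure_pmf.expectation (saga_iter n b \<eta> gf h x0 T) (\<lambda>_. F xs)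
      \<le> measure_pmf.expectation (saga_iter n b \<eta> gf h x0 T) lyapunov"
  proof (rule expectation_mono_finite[OF finite_set_pmf_saga_iter])
    fix s assume "s \<in> set_pmf (saga_iter n b \<eta> gf h x0 T)"
    then have "F xs \<le> F (fst s)" by (intro F_minimal saga_iter_in_edom[OF hx0])
    then show "F xs \<le> lyapunov s"
      using c_nonneg dispersion_nonneg[of s] unfolding lyapunov_def by (smt (verit) mult_nonneg_nonneg)
  qed
  then show ?thesis using telescope by simp
qed

definition epoch_length :: nat where
  "epoch_length = nat \<lceil>6 * L / (\<mu> * \<rho>)\<rceil>"

lemma epoch_length_pos: "epoch_length > 0"
  using L_pos mu_pos rho_pos by (simp add: epoch_length_def)

lemma epoch_length_ge: "real epoch_length * (\<eta> * \<mu>) \<ge> 6"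
proof -
  have "real epoch_length \<ge> 6 * L / (\<mu> * \<rho>)"
    unfolding epoch_length_def by linarith
  then have "real epoch_length * (\<eta> * \<mu>) \<ge> 6 * L / (\<mu> * \<rho>) * (\<eta> * \<mu>)"
    using eta_pos mu_pos by (intro mult_right_mono) auto
  also have "6 * L / (\<mu> * \<rho>) * (\<eta> * \<mu>) = 6"
    using L_pos mu_pos rho_pos by (simp add: \<eta>_def)
  finally show ?thesis .
qed

lemma prox_saga_halves_gap:
  "(\<integral>\<^sup>+ x. gap x \<partial>measure_pmf (prox_saga n gf h x0 epoch_length b \<eta>)) \<le> gap x0 / 2"
proof (cases "h x0 < \<infinity>")
  case False
  then show ?thesis by (simp add: gap_top ennreal_top_divide)
next
  case hx0: True
  define Q where "Q = prox_saga n gf h x0 epoch_length b \<eta>"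
  define S where "S = (\<Sum>t<epoch_length. measure_pmf.expectation (saga_iter n b \<eta> gf h x0 t) (\<lambda>s. F (fst s) - F xs))"
  have nonempty: "{0..<epoch_length} \<noteq> {}" using epoch_length_pos by simp
  have Q_fin: "finite (set_pmf Q)"
    unfolding Q_def prox_saga_def using finite_set_pmf_saga_iter by (simp add: set_pmf_of_set[OF nonempty])
  have Q_dom: "h x < \<infinity>" if "x \<in> set_pmf Q" for x
    using that saga_iter_in_edom[OF hx0]
    unfolding Q_def prox_saga_def by (auto simp: set_pmf_of_set[OF nonempty])
  have "(\<integral>\<^sup>+ x. gap x \<partial>measure_pmf Q) = (\<integral>\<^sup>+ x. ennreal (F x - F xs) \<partial>measure_pmf Q)"
    by (intro nn_integral_cong_AE) (auto simp: AE_measure_pmf_iff intro!: gap_eq Q_dom)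
  also have "\<dots> = ennreal (measure_pmf.expectation Q (\<lambda>x. F x - F xs))"
    by (intro nn_integral_eq_integral integrable_measure_pmf_finite[OF Q_fin])
       (auto simp: AE_measure_pmf_iff intro!: F_minimal Q_dom)
  also have "measure_pmf.expectation Q (\<lambda>x. F x - F xs) = S / real epoch_length"
    unfolding Q_def prox_saga_def S_def using nonempty finite_set_pmf_saga_iter
    by (subst pmf_expectation_bind_pmf_of_set)
       (auto simp: atLeast0LessThan sum_divide_distrib divide_inverse_commute sum_distrib_left)
  also have "S / real epoch_length \<le> (F x0 - F xs) / 2"
  proof -
    have "S \<ge> 0" unfolding S_def
      by (intro sum_nonneg integral_nonneg_AE)
         (auto simp: AE_measure_pmf_iff intro!: F_minimal dest!: saga_iter_in_edom[OF hx0])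
    then have "2 * S \<le> real epoch_length * (\<eta> * \<mu>) * S"
      using epoch_length_ge by (intro mult_right_mono) auto
    also have "\<dots> \<le> real epoch_length * (F x0 - F xs)"
      using mult_left_mono[OF expected_gap_sum_le[OF hx0], of "real epoch_length"]
      by (simp add: S_def mult.assoc)
    finally show ?thesis using epoch_length_pos by (simp add: field_simps)
  qed
  finally have "(\<integral>\<^sup>+ x. gap x \<partial>measure_pmf Q) \<le> ennreal ((F x0 - F xs) / 2)"
    by (simp add: ennreal_leI)
  also have "\<dots> = gap x0 / 2"
    using F_minimal[OF hx0] by (simp add: gap_eq[OF hx0] divide_ennreal[symmetric])
  finally show ?thesis unfolding Q_def .
qed

lemma pl_saga_gap_le: "(\<integral>\<^sup>+ x. gap x \<partial>measure_pmf (pl_saga n gf h x0 K epoch_length b \<eta>)) \<le> gap x0 / 2 ^ K"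
proof (induction K)
  case 0
  then show ?case by (simp add: divide_ennreal_def)
next
  case (Suc K)
  let ?P = "pl_saga n gf h x0 K epoch_length b \<eta>"
  have "(\<integral>\<^sup>+ x. gap x \<partial>measure_pmf (pl_saga n gf h x0 (Suc K) epoch_length b \<eta>))
      = (\<integral>\<^sup>+ x. (\<integral>\<^sup>+ y. gap y \<partial>measure_pmf (prox_saga n gf h x epoch_length b \<eta>)) \<partial>measure_pmf ?P)"
    by simp
  also have "\<dots> \<le> (\<integral>\<^sup>+ x. gap x * inverse 2 \<partial>measure_pmf ?P)"
    by (intro nn_integral_mono) (simp add: prox_saga_halves_gap[unfolded divide_ennreal_def])
  also have "\<dots> = (\<integral>\<^sup>+ x. gap x \<partial>measure_pmf ?P) * inverse 2"
    by (rule nn_integral_multc) simp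
  also have "\<dots> \<le> gap x0 / 2 ^ K * inverse 2"
    using Suc.IH by (rule mult_right_mono) simp
  also have "\<dots> = gap x0 / 2 ^ Suc K"
    using ennreal_inverse_mult[of "2 ^ K" 2]
    by (simp add: divide_ennreal_def mult.assoc mult.commute[of 2] power_less_top_ennreal)
  finally show ?case .
qed

end

theorem theorem9:
  fixes n b K :: nat
    and fs :: "nat \<Rightarrow> real^'d \<Rightarrow> real"
    and gf :: "nat \<Rightarrow> real^'d \<Rightarrow> real^'d"
    and h :: "real^'d \<Rightarrow> ereal"
    and L \<mu> \<rho> :: real
    and x0 xs :: "real^'d"
  assumes n_pos: "n \<ge> 1"
    and b_pos: "b \<ge> 1" and b_le: "b \<le> n"
    and L_pos: "L > 0"
    and grad: "\<And>i x. i \<in> {1..n} \<Longrightarrow> (fs i has_derivative (\<lambda>v. inner (gf i x) v)) (at x)"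
    and smooth: "\<And>i x y. i \<in> {1..n} \<Longrightarrow> norm (gf i x - gf i y) \<le> L * norm (x - y)"
    and h_proper: "proper_fun h" and h_lsc: "lsc_efun h" and h_convex: "convex_efun h"
    and h_dom_closed: "closed (edom h)"
    and xs_min: "\<And>x. ereal ((1 / real n) * (\<Sum>i=1..n. fs i xs)) + h xs
                      \<le> ereal ((1 / real n) * (\<Sum>i=1..n. fs i x)) + h x"
    and mu_pos: "\<mu> > 0"
    and PL: "is_PL \<mu> (\<lambda>x. (1 / real n) * (\<Sum>i=1..n. fs i x))
                     (\<lambda>x. (1 / real n) *\<^sub>R (\<Sum>i=1..n. gf i x)) h xs"
    and rho_pos: "\<rho> > 0" and rho_le: "\<rho> \<le> 1/5"
    and rho_cond: "16 * (real n)\<^sup>2 * \<rho>\<^sup>2 / (real b)^3 + \<rho> \<le> 1"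
    and K_pos: "K \<ge> 1"
  shows "(\<integral>\<^sup>+ x. e2ennreal ((ereal ((1 / real n) * (\<Sum>i=1..n. fs i x)) + h x)
                              - (ereal ((1 / real n) * (\<Sum>i=1..n. fs i xs)) + h xs))
           \<partial>measure_pmf (pl_saga n gf h x0 K (nat \<lceil>6 * L / (\<mu> * \<rho>)\<rceil>) b (\<rho> / L)))
         \<le> e2ennreal ((ereal ((1 / real n) * (\<Sum>i=1..n. fs i x0)) + h x0)
                      - (ereal ((1 / real n) * (\<Sum>i=1..n. fs i xs)) + h xs)) / 2 ^ K"
proof -
  interpret finite_sum_smooth n fs gf L
    using n_pos grad smooth by unfold_locales
  have avg_f_eq: "avg_f = (\<lambda>x. (1 / real n) * (\<Sum>i=1..n. fs i x))"
    by (simp add: avg_f_def[abs_def])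
  have avg_grad_eq: "avg_grad = (\<lambda>x. (1 / real n) *\<^sub>R (\<Sum>i=1..n. gf i x))"
    by (simp add: avg_grad_def[abs_def])
  interpret prox_saga_PL n fs gf L h \<mu> xs b \<rho>
    using avg_f_has_derivative avg_grad_lipschitz assms
    by unfold_locales (simp_all add: avg_f_eq avg_grad_eq)
  from pl_saga_gap_le[of x0 K] show ?thesis
    unfolding gap_def[abs_def] epoch_length_def \<eta>_def by (simp only: avg_f_eq)
qed

end
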